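(* Let $n>k\ge 1$ and $N=2^{q}$ for an integer $q\ge 0$, and let $G_1,\dots,G_N$ be simple graphs all on the vertex set $[n]$. Let $H$ be the graph on $[n]$ in which $\{1,\dots,k\}$ is a clique, $\{k+1,\dots,n\}$ is independent, and every vertex of $\{k+1,\dots,n\}$ is adjacent to every vertex of $\{1,\dots,k\}$. Build the classification instance $E$ with features $f_1,\dots,f_{2n},d_0$ as the union of blocks $B_1,\dots,B_{2N}$: for odd $i$, $B_i$ contains one negative example with $d_0=i$ and all $f_j=0$, and for each edge $\{a,b\}$ of $H$ one positive example with $d_0=i$, $f_{n+a}=f_{n+b}=1$ and all other $f_j=0$; for even $i$ with $r=i/2$, $B_i$ contains one positive example with $d_0=i$ and all $f_j=0$, and for each edge $\{a,b\}$ of $G_r$ one negative example with $d_0=i$, $f_a=f_b=1$ and all other $f_j=0$. Let $d=\log_2 N+k+1$. Then $E$ admits a decision tree of depth at most $d$ that classifies it if and only if every $G_j$, $j\in[N]$, has a vertex cover of size at most $k$.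
   Context: A classification instance is a finite set of examples (functions from a common feature set to $\mathbb{Z}$), each labeled positive or negative. A decision tree (DT) is a rooted tree whose test nodes $v$ carry a feature $f(v)$ and integer threshold $\lambda(v)$ (examples with $e(f(v))\le\lambda(v)$ go to the left child, others to the right child) and whose leaves are labeled positive or negative; $T$ classifies $E$ if every example reaches a leaf with its own label. Depth = maximum number of test nodes on a root-to-leaf path. *)

theory Defs
  imports Main
begin

(* Features: D0 is d_0, Fv j is f_j (only 1 <= j <= 2n are features of the instance). *)
datatype feat = Fv nat | D0

datatype 'f dtree = Leaf bool | Node 'f int "'f dtree" "'f dtree"

fun dt_eval :: "'f dtree \<Rightarrow> ('f \<Rightarrow> int) \<Rightarrow> bool" where
  "dt_eval (Leaf b) e = b"
| "dt_eval (Node f t l r) e = (if e f \<le> t then dt_eval l e else dt_eval r e)"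

fun dt_depth :: "'f dtree \<Rightarrow> nat" where
  "dt_depth (Leaf b) = 0"
| "dt_depth (Node f t l r) = Suc (max (dt_depth l) (dt_depth r))"

fun dt_feats :: "'f dtree \<Rightarrow> 'f set" where
  "dt_feats (Leaf b) = {}"
| "dt_feats (Node f t l r) = insert f (dt_feats l \<union> dt_feats r)"

(* A labelled example set: pairs (example, label), True = positive. *)
definition classifies :: "'f dtree \<Rightarrow> (('f \<Rightarrow> int) \<times> bool) set \<Rightarrow> bool" where
  "classifies T E \<longleftrightarrow> (\<forall>(e, b) \<in> E. dt_eval T e = b)"

definition feats :: "nat \<Rightarrow> feat set" where
  "feats n = {D0} \<union> Fv ` {1..2*n}"

definition simple_graph :: "nat \<Rightarrow> nat set set \<Rightarrow> bool" where
  "simple_graph n E \<longleftrightarrow> (\<forall>e\<in>E. \<exists>a b. e = {a, b} \<and> a \<noteq> b \<and> a \<in> {1..n} \<and> b \<in> {1..n})"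

definition has_vc :: "nat \<Rightarrow> nat set set \<Rightarrow> nat \<Rightarrow> bool" where
  "has_vc n E k \<longleftrightarrow> (\<exists>C. C \<subseteq> {1..n} \<and> card C \<le> k \<and> (\<forall>e\<in>E. e \<inter> C \<noteq> {}))"

definition H_edges :: "nat \<Rightarrow> nat \<Rightarrow> nat set set" where
  "H_edges n k = {{a, b} | a b. a \<noteq> b \<and> a \<in> {1..n} \<and> b \<in> {1..n} \<and> (a \<le> k \<or> b \<le> k)}"

definition ex :: "nat \<Rightarrow> nat set \<Rightarrow> feat \<Rightarrow> int" where
  "ex i S = (\<lambda>f. case f of D0 \<Rightarrow> int i | Fv j \<Rightarrow> (if j \<in> S then 1 else 0))"

definition block :: "nat \<Rightarrow> nat \<Rightarrow> (nat \<Rightarrow> nat set set) \<Rightarrow> nat \<Rightarrow> ((feat \<Rightarrow> int) \<times> bool) set" where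
  "block n k G i =
     (if odd i then {(ex i {}, False)} \<union> {(ex i ((\<lambda>v. n + v) ` e), True) | e. e \<in> H_edges n k}
      else {(ex i {}, True)} \<union> {(ex i e, False) | e. e \<in> G (i div 2)})"

definition inst :: "nat \<Rightarrow> nat \<Rightarrow> nat \<Rightarrow> (nat \<Rightarrow> nat set set) \<Rightarrow> ((feat \<Rightarrow> int) \<times> bool) set" where
  "inst n k q G = (\<Union>i\<in>{1..2 * 2^q}. block n k G i)"

end

theory Submission
  imports Defs
begin

text \<open>
  On the all-zero example of block \<open>i\<close> only the tests on \<open>d\<^sub>0\<close> and the tests
  \<open>f\<^sub>j \<le> 0\<close> matter. Every edge example of a block must be separated from the all-zero example
  by a test \<open>f\<^sub>j \<le> 0\<close> with \<open>j\<close> an end of the edge on the latter's path, so these \<open>j\<close> form a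
  vertex cover. For an odd block this covers the clique on \<open>{1..k+1}\<close> inside \<open>H\<close>, so the path
  has at least \<open>k\<close> such tests and hence at most \<open>q + 1\<close> tests on \<open>d\<^sub>0\<close>. As the labels of the
  \<open>2N = 2\<^sup>q\<^sup>+\<^sup>1\<close> all-zero examples alternate along \<open>d\<^sub>0\<close>, a halving argument shows that then
  every even block also needs \<open>q + 1\<close> tests on \<open>d\<^sub>0\<close>, leaving at most \<open>k\<close> tests for its
  vertex cover of \<open>G\<^sub>i\<^sub>/\<^sub>2\<close>. Conversely, a balanced search on \<open>d\<^sub>0\<close> of depth \<open>q\<close> selects a
  pair of blocks, one more \<open>d\<^sub>0\<close> test separates them, and \<open>k\<close> feature tests finish: the shifted
  features of \<open>{1..k}\<close> for the odd block, those of a vertex cover for the even one.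
\<close>

fun dt_path :: "'f dtree \<Rightarrow> ('f \<Rightarrow> int) \<Rightarrow> ('f \<times> int) list" where
  "dt_path (Leaf b) e = []"
| "dt_path (Node f t l r) e = (f, t) # (if e f \<le> t then dt_path l e else dt_path r e)"

lemma length_dt_path_le_depth: "length (dt_path T e) \<le> dt_depth T"
  by (induction T) auto

lemma separating_test_on_path:
  "dt_eval T e \<noteq> dt_eval T e' \<Longrightarrow> \<exists>(f, t) \<in> set (dt_path T e). (e f \<le> t) \<noteq> (e' f \<le> t)"
  by (induction T) (auto split: if_splits)

definition dt_tests :: "'f \<Rightarrow> 'f dtree \<Rightarrow> ('f \<Rightarrow> int) \<Rightarrow> nat" where
  "dt_tests d T e = length (filter (\<lambda>p. fst p = d) (dt_path T e))"

lemma dt_tests_Leaf [simp]: "dt_tests d (Leaf b) e = 0"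
  by (simp add: dt_tests_def)

lemma dt_tests_Node [simp]:
  "dt_tests d (Node f t l r) e =
     (if f = d then 1 else 0) + (if e f \<le> t then dt_tests d l e else dt_tests d r e)"
  by (simp add: dt_tests_def)

lemma interval_le_one_of_const_parity:
  assumes "\<forall>x\<in>{lo..<hi}. even x = c"
  shows "hi - lo \<le> (1::nat)"
proof (rule ccontr)
  assume "\<not> hi - lo \<le> 1"
  then have "lo \<in> {lo..<hi}" "Suc lo \<in> {lo..<hi}"
    by auto
  then have "even lo = c" "even (Suc lo) = c"
    using assms by blast+
  then show False
    by simp
qed

lemma le_one_imp_le_power_two:
  assumes "x \<le> (1::nat)"
  shows "x \<le> 2 ^ m \<and> (x = 2 ^ m \<longrightarrow> m = 0)"
proof -
  have "(1::nat) \<le> 2 ^ m" by simp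
  then show ?thesis
    using assms power_le_one_iff[of "2::nat" m] by auto
qed

lemma add_le_power_two_Suc:
  fixes a b :: nat
  assumes "a \<le> 2 ^ m \<and> (a = 2 ^ m \<longrightarrow> P)" and "b \<le> 2 ^ m \<and> (b = 2 ^ m \<longrightarrow> Q)"
  shows "a + b \<le> 2 ^ Suc m \<and> (a + b = 2 ^ Suc m \<longrightarrow> P \<and> Q)"
  using assms by auto

text \<open>Tests on features other than \<open>d\<close> send all points of the interval the same way, while a
  test on \<open>d\<close> splits it in two; this is the halving argument.\<close>

lemma alternating_interval_size:
  fixes T :: "'f dtree" and e :: "nat \<Rightarrow> 'f \<Rightarrow> int"
  assumes e_d: "\<And>x. e x d = int x"
    and e_const: "\<And>x y f. f \<noteq> d \<Longrightarrow> e x f = e y f"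
  shows "(\<forall>x\<in>{lo..<hi}. dt_eval T (e x) = even x) \<Longrightarrow>
         (\<forall>x\<in>{lo..<hi}. odd x \<longrightarrow> dt_tests d T (e x) \<le> m) \<Longrightarrow>
         hi - lo \<le> 2 ^ m \<and> (hi - lo = 2 ^ m \<longrightarrow> (\<forall>x\<in>{lo..<hi}. even x \<longrightarrow> m \<le> dt_tests d T (e x)))"
proof (induction T arbitrary: lo hi m)
  case (Leaf b)
  then have "hi - lo \<le> 1"
    by (intro interval_le_one_of_const_parity[of lo hi b]) simp
  then show ?case
    using le_one_imp_le_power_two by blast
next
  case (Node f t l r)
  show ?case
  proof (cases "f = d")
    case False
    then have same_branch: "\<And>x. e x f \<le> t \<longleftrightarrow> e lo f \<le> t"
      using e_const by metis
    show ?thesis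
    proof (cases "e lo f \<le> t")
      case True
      then have "dt_eval (Node f t l r) (e x) = dt_eval l (e x)"
        "dt_tests d (Node f t l r) (e x) = dt_tests d l (e x)" for x
        using same_branch \<open>f \<noteq> d\<close> by simp_all
      then show ?thesis
        using Node.IH(1)[of lo hi m] Node.prems by simp
    next
      case False
      then have "dt_eval (Node f t l r) (e x) = dt_eval r (e x)"
        "dt_tests d (Node f t l r) (e x) = dt_tests d r (e x)" for x
        using same_branch \<open>f \<noteq> d\<close> by simp_all
      then show ?thesis
        using Node.IH(2)[of lo hi m] Node.prems by simp
    qed
  next
    case True
    show ?thesis
    proof (cases m)
      case 0
      then have "hi - lo \<le> 1"
        using Node.prems(2) True by (intro interval_le_one_of_const_parity[of lo hi True]) auto
      then show ?thesis
        using le_one_imp_le_power_two by blast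
    next
      case (Suc m')
      define s where "s = min hi (max lo (nat (t + 1)))"
      have s: "{lo..<s} \<subseteq> {lo..<hi}" "{s..<hi} \<subseteq> {lo..<hi}" "lo \<le> hi \<Longrightarrow> lo \<le> s \<and> s \<le> hi"
        by (auto simp: s_def)
      have branch: "x \<in> {lo..<hi} \<Longrightarrow> int x \<le> t \<longleftrightarrow> x < s" for x
        by (auto simp: s_def)
      have to_left: "dt_eval (Node f t l r) (e x) = dt_eval l (e x) \<and>
          dt_tests d (Node f t l r) (e x) = Suc (dt_tests d l (e x))" if "x \<in> {lo..<s}" for x
        using that s(1) branch[of x] True e_d by auto
      have to_right: "dt_eval (Node f t l r) (e x) = dt_eval r (e x) \<and>
          dt_tests d (Node f t l r) (e x) = Suc (dt_tests d r (e x))" if "x \<in> {s..<hi}" for x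
        using that s(2) branch[of x] True e_d by auto
      have "s - lo \<le> 2 ^ m' \<and>
          (s - lo = 2 ^ m' \<longrightarrow> (\<forall>x\<in>{lo..<s}. even x \<longrightarrow> m' \<le> dt_tests d l (e x)))"
        by (rule Node.IH(1)) (use Node.prems s(1) to_left Suc in fastforce)+
      moreover have "hi - s \<le> 2 ^ m' \<and>
          (hi - s = 2 ^ m' \<longrightarrow> (\<forall>x\<in>{s..<hi}. even x \<longrightarrow> m' \<le> dt_tests d r (e x)))"
        by (rule Node.IH(2)) (use Node.prems s(2) to_right Suc in fastforce)+
      ultimately have "(s - lo) + (hi - s) \<le> 2 ^ m \<and> ((s - lo) + (hi - s) = 2 ^ m \<longrightarrow>
          (\<forall>x\<in>{lo..<s}. even x \<longrightarrow> m' \<le> dt_tests d l (e x)) \<and>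
          (\<forall>x\<in>{s..<hi}. even x \<longrightarrow> m' \<le> dt_tests d r (e x)))"
        unfolding Suc by (rule add_le_power_two_Suc)
      then show ?thesis
        using s branch True Suc e_d by (cases "lo \<le> hi") auto
    qed
  qed
qed

lemma card_le_Suc_of_covers_pairs:
  assumes "finite A" and "\<And>u v. u \<in> A \<Longrightarrow> v \<in> A \<Longrightarrow> u \<noteq> v \<Longrightarrow> u \<in> C \<or> v \<in> C"
  shows "card A \<le> Suc (card (A \<inter> C))"
proof -
  have "card (A - C) \<le> Suc 0"
    using assms by (subst card_le_Suc0_iff_eq) blast+
  then show ?thesis
    using card_Int_Diff[OF assms(1), of C] by simp
qed

lemma ex_D0 [simp]: "ex i S D0 = int i"
  by (simp add: ex_def)

lemma ex_empty_Fv [simp]: "ex i {} (Fv j) = 0"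
  by (simp add: ex_def)

lemma ex_empty_indep: "f \<noteq> D0 \<Longrightarrow> ex i {} f = ex i' {} f"
  by (cases f) simp_all

definition zero_tested :: "feat dtree \<Rightarrow> (feat \<Rightarrow> int) \<Rightarrow> nat set" where
  "zero_tested T e = {j. (Fv j, 0) \<in> set (dt_path T e)}"

lemma finite_zero_tested: "finite (zero_tested T e)"
proof -
  have "zero_tested T e = (\<lambda>j. (Fv j, 0)) -` set (dt_path T e)"
    by (auto simp: zero_tested_def)
  moreover have "inj (\<lambda>j. (Fv j, 0::int))"
    by (simp add: inj_on_def)
  ultimately show ?thesis
    by (metis finite_set finite_vimageI)
qed

lemma zero_tested_separates:
  assumes "dt_eval T (ex i {}) \<noteq> dt_eval T (ex i S)"
  shows "S \<inter> zero_tested T (ex i {}) \<noteq> {}"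
proof -
  obtain f t where f: "(f, t) \<in> set (dt_path T (ex i {}))" "(ex i {} f \<le> t) \<noteq> (ex i S f \<le> t)"
    using separating_test_on_path[OF assms] by blast
  then obtain j where "f = Fv j" "j \<in> S" "t = 0"
    by (cases f) (auto simp: ex_def split: if_splits)
  with f(1) show ?thesis
    by (auto simp: zero_tested_def)
qed

lemma card_zero_tested_add_D0_tests:
  "card (zero_tested T e) + dt_tests D0 T e \<le> dt_depth T"
proof -
  let ?P = "dt_path T e"
  have "zero_tested T e = (\<lambda>j. (Fv j, 0)) -` set (filter (\<lambda>p. fst p \<noteq> D0) ?P)"
    by (auto simp: zero_tested_def)
  moreover have "inj (\<lambda>j. (Fv j, 0::int))"
    by (simp add: inj_on_def)
  ultimately have "card (zero_tested T e) \<le> card (set (filter (\<lambda>p. fst p \<noteq> D0) ?P))"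
    using card_vimage_inj_on_le[of "\<lambda>j. (Fv j, 0::int)" UNIV] by (metis Int_UNIV_right finite_set)
  also have "\<dots> \<le> length (filter (\<lambda>p. fst p \<noteq> D0) ?P)"
    by (rule card_length)
  finally show ?thesis
    using sum_length_filter_compl[of "\<lambda>p. fst p = D0" ?P] length_dt_path_le_depth[of T e]
    by (simp add: dt_tests_def)
qed

lemma has_vc_mono: "has_vc n E c \<Longrightarrow> c \<le> k \<Longrightarrow> has_vc n E k"
  unfolding has_vc_def by (meson order.trans)

lemma block_D0: "(e, b) \<in> block n k G i \<Longrightarrow> e D0 = int i"
  by (auto simp: block_def split: if_splits)

lemma classifies_inst_block:
  assumes "classifies T (inst n k q G)" "i \<in> {1..2 * 2 ^ q}" "(e, b) \<in> block n k G i"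
  shows "dt_eval T e = b"
  using assms unfolding classifies_def inst_def by auto

lemma classifies_inst_ex_empty:
  assumes "classifies T (inst n k q G)" "i \<in> {1..2 * 2 ^ q}"
  shows "dt_eval T (ex i {}) = even i"
  by (rule classifies_inst_block[OF assms]) (auto simp: block_def)

lemma odd_block_card_zero_tested:
  assumes T: "classifies T (inst n k q G)" "i \<in> {1..2 * 2 ^ q}"
    and "odd i" and "k < n"
  shows "k \<le> card (zero_tested T (ex i {}))"
proof -
  let ?Z = "zero_tested T (ex i {})"
  let ?C = "(\<lambda>v. n + v) -` ?Z"
  have "u \<in> ?C \<or> v \<in> ?C" if "u \<in> {1..k+1}" "v \<in> {1..k+1}" "u \<noteq> v" for u v
  proof -
    have "{u, v} \<in> H_edges n k"
      using that \<open>k < n\<close> unfolding H_edges_def by fastforce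
    then have "(ex i ((\<lambda>v. n + v) ` {u, v}), True) \<in> block n k G i"
      using \<open>odd i\<close> unfolding block_def by (auto intro!: exI[of _ "{u, v}"])
    then have "dt_eval T (ex i ((\<lambda>v. n + v) ` {u, v})) = True"
      by (rule classifies_inst_block[OF T])
    then have "dt_eval T (ex i {}) \<noteq> dt_eval T (ex i ((\<lambda>v. n + v) ` {u, v}))"
      using classifies_inst_ex_empty[OF T] \<open>odd i\<close> by simp
    from zero_tested_separates[OF this] show ?thesis
      by blast
  qed
  then have "card {1..k+1} \<le> Suc (card ({1..k+1} \<inter> ?C))"
    by (intro card_le_Suc_of_covers_pairs) auto
  moreover have "card (?C \<inter> {1..k+1}) \<le> card ?Z"
    by (rule card_vimage_inj_on_le) (simp_all add: finite_zero_tested)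
  ultimately show ?thesis
    by (simp add: Int_commute)
qed

lemma even_block_vertex_cover:
  assumes T: "classifies T (inst n k q G)" "i \<in> {1..2 * 2 ^ q}"
    and "even i" and "simple_graph n (G (i div 2))"
  shows "has_vc n (G (i div 2)) (card (zero_tested T (ex i {})))"
proof -
  let ?Z = "zero_tested T (ex i {})"
  have "e \<inter> (?Z \<inter> {1..n}) \<noteq> {}" if edge: "e \<in> G (i div 2)" for e
  proof -
    have "(ex i e, False) \<in> block n k G i"
      using edge \<open>even i\<close> unfolding block_def by auto
    then have "dt_eval T (ex i e) = False"
      by (rule classifies_inst_block[OF T])
    then have "dt_eval T (ex i {}) \<noteq> dt_eval T (ex i e)"
      using classifies_inst_ex_empty[OF T] \<open>even i\<close> by simp
    moreover obtain a b where "e = {a, b}" "a \<in> {1..n}" "b \<in> {1..n}"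
      using edge \<open>simple_graph n (G (i div 2))\<close> unfolding simple_graph_def by meson
    ultimately show ?thesis
      using zero_tested_separates[of T i e] by auto
  qed
  moreover have "card (?Z \<inter> {1..n}) \<le> card ?Z"
    by (simp add: card_mono finite_zero_tested)
  ultimately show ?thesis
    unfolding has_vc_def by (intro exI[of _ "?Z \<inter> {1..n}"]) auto
qed

lemma vertex_covers_of_classifying_tree:
  assumes "k < n" and graphs: "\<forall>r\<in>{1..2 ^ q}. simple_graph n (G r)"
    and T: "classifies T (inst n k q G)" and depth: "dt_depth T \<le> q + k + 1"
  shows "\<forall>j\<in>{1..2 ^ q}. has_vc n (G j) k"
proof -
  let ?Z = "\<lambda>i. zero_tested T (ex i {})"
  have budget: "card (?Z i) + dt_tests D0 T (ex i {}) \<le> q + k + 1" for i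
    using card_zero_tested_add_D0_tests[of T "ex i {}"] depth by linarith
  let ?hi = "1 + 2 * 2 ^ q :: nat"
  have blocks: "{1..<?hi} = {1..2 * 2 ^ q}"
    by auto
  have "?hi - 1 \<le> 2 ^ Suc q \<and> (?hi - 1 = 2 ^ Suc q \<longrightarrow>
      (\<forall>i\<in>{1..<?hi}. even i \<longrightarrow> Suc q \<le> dt_tests D0 T (ex i {})))"
  proof (rule alternating_interval_size[of "\<lambda>i. ex i {}" D0])
    show "\<forall>i\<in>{1..<?hi}. dt_eval T (ex i {}) = even i"
      using classifies_inst_ex_empty[OF T] unfolding blocks by blast
    show "\<forall>i\<in>{1..<?hi}. odd i \<longrightarrow> dt_tests D0 T (ex i {}) \<le> Suc q"
    proof (intro ballI impI)
      fix i assume "i \<in> {1..<?hi}" "odd i"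
      then have "k \<le> card (?Z i)"
        using odd_block_card_zero_tested[OF T _ _ \<open>k < n\<close>] unfolding blocks by blast
      then show "dt_tests D0 T (ex i {}) \<le> Suc q"
        using budget[of i] by linarith
    qed
  qed (simp_all add: ex_empty_indep)
  then have even_D0: "Suc q \<le> dt_tests D0 T (ex i {})" if "i \<in> {1..2 * 2 ^ q}" "even i" for i
    using that unfolding blocks by simp
  show ?thesis
  proof
    fix j :: nat assume j: "j \<in> {1..2 ^ q}"
    then have i: "2 * j \<in> {1..2 * 2 ^ q}" "even (2 * j)" "2 * j div 2 = j"
      by auto
    have "has_vc n (G j) (card (?Z (2 * j)))"
      using even_block_vertex_cover[OF T i(1,2)] graphs j i(3) by simp
    moreover have "card (?Z (2 * j)) \<le> k"
      using even_D0[OF i(1,2)] budget[of "2 * j"] by linarith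
    ultimately show "has_vc n (G j) k"
      by (rule has_vc_mono)
  qed
qed

fun some_pos_tree :: "'f list \<Rightarrow> bool \<Rightarrow> bool \<Rightarrow> 'f dtree" where
  "some_pos_tree [] yes no = Leaf no"
| "some_pos_tree (f # fs) yes no = Node f 0 (some_pos_tree fs yes no) (Leaf yes)"

lemma dt_eval_some_pos_tree:
  "dt_eval (some_pos_tree fs yes no) e = (if \<exists>f\<in>set fs. 0 < e f then yes else no)"
  by (induction fs) auto

lemma dt_depth_some_pos_tree: "dt_depth (some_pos_tree fs yes no) = length fs"
  by (induction fs) auto

lemma dt_feats_some_pos_tree: "dt_feats (some_pos_tree fs yes no) = set fs"
  by (induction fs) auto

text \<open>\<open>search_tree d P q b\<close> sends the values \<open>2r - 1\<close> and \<open>2r\<close> of \<open>d\<close> to the subtree \<open>P r\<close>,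
  for \<open>b < r \<le> b + 2\<^sup>q\<close>.\<close>

fun search_tree :: "'f \<Rightarrow> (nat \<Rightarrow> 'f dtree) \<Rightarrow> nat \<Rightarrow> nat \<Rightarrow> 'f dtree" where
  "search_tree d P 0 b = P (Suc b)"
| "search_tree d P (Suc q) b =
     Node d (2 * int (b + 2 ^ q)) (search_tree d P q b) (search_tree d P q (b + 2 ^ q))"

lemma dt_eval_search_tree:
  "x \<in> {2 * b + 1..2 * (b + 2 ^ q)} \<Longrightarrow> e d = int x \<Longrightarrow>
   dt_eval (search_tree d P q b) e = dt_eval (P ((x + 1) div 2)) e"
proof (induction q arbitrary: b)
  case 0
  then have "(x + 1) div 2 = Suc b"
    by auto
  then show ?case
    by simp
next
  case (Suc q)
  show ?case
  proof (cases "x \<le> 2 * (b + 2 ^ q)")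
    case True
    then have "e d \<le> 2 * int (b + 2 ^ q)"
      using Suc.prems(2) by linarith
    then show ?thesis
      using Suc True by auto
  next
    case False
    then have "\<not> e d \<le> 2 * int (b + 2 ^ q)"
      using Suc.prems(2) by linarith
    then show ?thesis
      using Suc.IH[of "b + 2 ^ q"] Suc.prems False by auto
  qed
qed

lemma dt_depth_search_tree:
  "(\<And>r. r \<in> {b + 1..b + 2 ^ q} \<Longrightarrow> dt_depth (P r) \<le> D) \<Longrightarrow> dt_depth (search_tree d P q b) \<le> q + D"
proof (induction q arbitrary: b)
  case (Suc q)
  have "dt_depth (search_tree d P q b) \<le> q + D" "dt_depth (search_tree d P q (b + 2 ^ q)) \<le> q + D"
    by (rule Suc.IH; auto intro: Suc.prems)+
  then show ?case
    by simp
qed simp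

lemma dt_feats_search_tree:
  "(\<And>r. r \<in> {b + 1..b + 2 ^ q} \<Longrightarrow> dt_feats (P r) \<subseteq> F) \<Longrightarrow> d \<in> F \<Longrightarrow>
   dt_feats (search_tree d P q b) \<subseteq> F"
proof (induction q arbitrary: b)
  case (Suc q)
  have "dt_feats (search_tree d P q b) \<subseteq> F" "dt_feats (search_tree d P q (b + 2 ^ q)) \<subseteq> F"
    by (rule Suc.IH; simp add: Suc.prems)+
  then show ?case
    using Suc.prems(2) by simp
qed simp

definition block_pair_tree :: "nat \<Rightarrow> nat \<Rightarrow> nat set \<Rightarrow> nat \<Rightarrow> feat dtree" where
  "block_pair_tree n k C r =
     Node D0 (2 * int r - 1)
       (some_pos_tree (map (\<lambda>v. Fv (n + v)) [1..<Suc k]) True False)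
       (some_pos_tree (map Fv (sorted_list_of_set C)) False True)"

lemma dt_eval_block_pair_tree:
  assumes "finite C" and cover: "\<forall>e\<in>G r. e \<inter> C \<noteq> {}"
    and i: "i = 2 * r - 1 \<or> i = 2 * r" "1 \<le> r" and eb: "(e, b) \<in> block n k G i"
  shows "dt_eval (block_pair_tree n k C r) e = b"
proof (cases "odd i")
  case True
  then have "i = 2 * r - 1"
    using i by auto
  then have "dt_eval (block_pair_tree n k C r) e =
      (\<exists>v\<in>{1..k}. 0 < e (Fv (n + v)))"
    using block_D0[OF eb] i(2) by (auto simp: block_pair_tree_def dt_eval_some_pos_tree)
  moreover from eb True consider "e = ex i {}" "b = False"
    | s where "s \<in> H_edges n k" "e = ex i ((\<lambda>v. n + v) ` s)" "b = True"
    unfolding block_def by auto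
  then have "(\<exists>v\<in>{1..k}. 0 < e (Fv (n + v))) = b"
  proof cases
    case (2 s)
    then obtain u w where "s = {u, w}" "1 \<le> u" "u \<le> k"
      unfolding H_edges_def by (auto simp: insert_commute)
    with 2 show ?thesis
      by (auto simp: ex_def)
  qed simp
  ultimately show ?thesis
    by simp
next
  case False
  then have "i = 2 * r"
    using i by auto
  then have "dt_eval (block_pair_tree n k C r) e = (\<not> (\<exists>c\<in>C. 0 < e (Fv c)))"
    using block_D0[OF eb] \<open>finite C\<close> by (auto simp: block_pair_tree_def dt_eval_some_pos_tree)
  moreover from eb False \<open>i = 2 * r\<close> consider "e = ex i {}" "b = True"
    | s where "s \<in> G r" "e = ex i s" "b = False"
    unfolding block_def by auto
  then have "(\<not> (\<exists>c\<in>C. 0 < e (Fv c))) = b"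
  proof cases
    case (2 s)
    then obtain c where "c \<in> s" "c \<in> C"
      using cover by blast
    with 2 show ?thesis
      by (auto simp: ex_def)
  qed simp
  ultimately show ?thesis
    by simp
qed

lemma classifying_tree_of_vertex_covers:
  assumes "k < n" and vc: "\<forall>j\<in>{1..2 ^ q}. has_vc n (G j) k"
  shows "\<exists>T. dt_feats T \<subseteq> feats n \<and> classifies T (inst n k q G) \<and> dt_depth T \<le> q + k + 1"
proof -
  obtain C where C: "\<And>j. j \<in> {1..2 ^ q} \<Longrightarrow>
      C j \<subseteq> {1..n} \<and> card (C j) \<le> k \<and> (\<forall>e\<in>G j. e \<inter> C j \<noteq> {})"
    using bchoice[OF vc[unfolded has_vc_def]] by metis
  then have finite_C: "\<And>j. j \<in> {1..2 ^ q} \<Longrightarrow> finite (C j)"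
    by (meson finite_atLeastAtMost finite_subset)
  define T where "T = search_tree D0 (\<lambda>r. block_pair_tree n k (C r) r) q 0"
  have "dt_depth T \<le> q + (k + 1)"
    unfolding T_def
    by (rule dt_depth_search_tree)
      (simp add: block_pair_tree_def dt_depth_some_pos_tree C finite_C)
  moreover have "dt_feats T \<subseteq> feats n"
    unfolding T_def
  proof (rule dt_feats_search_tree)
    fix r :: nat assume "r \<in> {0 + 1..0 + 2 ^ q}"
    then show "dt_feats (block_pair_tree n k (C r) r) \<subseteq> feats n"
      using C[of r] finite_C[of r] \<open>k < n\<close>
      by (auto simp: block_pair_tree_def dt_feats_some_pos_tree feats_def)
  qed (simp add: feats_def)
  moreover have "classifies T (inst n k q G)"
    unfolding classifies_def
  proof (clarify)
    fix e b assume "(e, b) \<in> inst n k q G"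
    then obtain i where i: "i \<in> {1..2 * 2 ^ q}" and eb: "(e, b) \<in> block n k G i"
      unfolding inst_def by blast
    define r where "r = (i + 1) div 2"
    have r: "r \<in> {1..2 ^ q}" "i = 2 * r - 1 \<or> i = 2 * r"
      using i unfolding r_def by auto
    have "dt_eval T e = dt_eval (block_pair_tree n k (C r) r) e"
      unfolding T_def r_def using i block_D0[OF eb] by (intro dt_eval_search_tree) auto
    also have "\<dots> = b"
      using dt_eval_block_pair_tree[OF finite_C[OF r(1)] _ r(2) _ eb] C[OF r(1)] r(1) by simp
    finally show "dt_eval T e = b" .
  qed
  ultimately show ?thesis
    by auto
qed

theorem lemma11:
  fixes n k q :: nat and G :: "nat \<Rightarrow> nat set set"
  assumes "1 \<le> k" and "k < n"
    and "\<forall>r\<in>{1..2^q}. simple_graph n (G r)"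
  shows "(\<exists>T :: feat dtree. dt_feats T \<subseteq> feats n \<and> classifies T (inst n k q G)
            \<and> dt_depth T \<le> q + k + 1)
         \<longleftrightarrow> (\<forall>j\<in>{1..2^q}. has_vc n (G j) k)"
proof
  assume "\<exists>T :: feat dtree. dt_feats T \<subseteq> feats n \<and> classifies T (inst n k q G)
            \<and> dt_depth T \<le> q + k + 1"
  then obtain T :: "feat dtree" where "classifies T (inst n k q G)" "dt_depth T \<le> q + k + 1"
    by blast
  then show "\<forall>j\<in>{1..2^q}. has_vc n (G j) k"
    using vertex_covers_of_classifying_tree[OF \<open>k < n\<close> assms(3)] by blast
next
  assume "\<forall>j\<in>{1..2^q}. has_vc n (G j) k"
  then show "\<exists>T :: feat dtree. dt_feats T \<subseteq> feats n \<and> classifies T (inst n k q G)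
            \<and> dt_depth T \<le> q + k + 1"
    using classifying_tree_of_vertex_covers[OF \<open>k < n\<close>] by blast
qed

end
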